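(* Let $D_1,\ldots,D_q\subseteq V\times V$ be demand graphs with $|D_i|=k$, reordered such that $\mathrm{mincut}_G(D_1)<\mathrm{mincut}_G(D_2)<\ldots<\mathrm{mincut}_G(D_q)$. Then the polynomials $P_{1}, P_{2}, \ldots, P_{q}$ are linearly independent.
   Context: $G=(V,E,w)$ is an undirected edge-weighted graph with $n=|V|$. For a partition $\Pi$ of $V$, $\Pi(v)$ is the part containing $v$, and $\mathrm{cut}_G(\Pi)=\sum_{uv\in E:\Pi(u)\neq\Pi(v)} w(uv)$. A partition agrees with (is feasible for) a demand graph $D$ if every $uv\in D$ has $\Pi(u)\neq\Pi(v)$, and $\mathrm{mincut}_G(D)$ is the minimum of $\mathrm{cut}_G(\Pi)$ over partitions agreeing with $D$. Each vertex $v$ gets a variable $\phi_v$ taking values in $[n]$ (a partition is instantiated by assigning each vertex a label of its part). For each demand graph $D_j$ define $P_j=\prod_{uv\in D_j}(\phi_u-\phi_v)$, a polynomial of degree $k$; a partition $\Pi$ is feasible for $D_j$ iff $P_j(\Pi)\neq 0$. *)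

theory Defs
  imports Complex_Main "HOL-Library.Poly_Mapping" "HOL-Library.Disjoint_Sets"
begin

definition undirected_graph :: "'v set \<Rightarrow> 'v set set \<Rightarrow> bool" where
  "undirected_graph V E \<longleftrightarrow> finite V \<and> (\<forall>e\<in>E. e \<subseteq> V \<and> card e = 2)"

definition same_part :: "'v set set \<Rightarrow> 'v \<Rightarrow> 'v \<Rightarrow> bool" where
  "same_part P u v \<longleftrightarrow> (\<exists>X\<in>P. u \<in> X \<and> v \<in> X)"

definition cut_weight :: "'v set set \<Rightarrow> ('v set \<Rightarrow> real) \<Rightarrow> 'v set set \<Rightarrow> real" where
  "cut_weight E w P = (\<Sum>e\<in>{e\<in>E. \<not> (\<exists>u v. e = {u, v} \<and> same_part P u v)}. w e)"

definition agrees :: "'v set set \<Rightarrow> ('v \<times> 'v) set \<Rightarrow> bool" where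
  "agrees P D \<longleftrightarrow> (\<forall>(u, v)\<in>D. \<not> same_part P u v)"

definition mincut :: "'v set \<Rightarrow> 'v set set \<Rightarrow> ('v set \<Rightarrow> real) \<Rightarrow> ('v \<times> 'v) set \<Rightarrow> real" where
  "mincut V E w D = Inf (cut_weight E w ` {P. partition_on V P \<and> agrees P D})"

definition demand_graph :: "'v set \<Rightarrow> ('v \<times> 'v) set \<Rightarrow> bool" where
  "demand_graph V D \<longleftrightarrow> D \<subseteq> V \<times> V \<and> (\<forall>(u, v)\<in>D. u \<noteq> v)"

text \<open>Multivariate polynomials with real coefficients in variables phi_v (v a vertex),
  as finitely supported maps from monomials (exponent vectors) to coefficients.\<close>
type_synonym 'v mpoly = "('v \<Rightarrow>\<^sub>0 nat) \<Rightarrow>\<^sub>0 real"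

definition phi :: "'v \<Rightarrow> 'v mpoly" where
  "phi v = Poly_Mapping.single (Poly_Mapping.single v 1) 1"

definition const_poly :: "real \<Rightarrow> 'v mpoly" where
  "const_poly c = Poly_Mapping.single 0 c"

definition demand_poly :: "('v \<times> 'v) set \<Rightarrow> 'v mpoly" where
  "demand_poly D = (\<Prod>(u, v)\<in>D. phi u - phi v)"

end

theory Submission imports Defs begin

text \<open>Evaluate the demand polynomials at a labelling (distinct values on distinct parts) of a
  minimum cut partition for D i. P i does not vanish there, while P j for j > i does: otherwise
  that partition would be feasible for D j, giving mincut(D j) \<le> mincut(D i). The matrix of
  these evaluations is triangular with nonzero diagonal, so a vanishing linear combination of
  the P i has only zero coefficients.\<close>

lemma triangular_combination_eq_zero:
  fixes a :: "'i::linorder \<Rightarrow> 'i \<Rightarrow> 'a::idom" and c :: "'i \<Rightarrow> 'a"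
  assumes "finite I"
    and diag: "\<And>i. i \<in> I \<Longrightarrow> a i i \<noteq> 0"
    and upper: "\<And>i j. i \<in> I \<Longrightarrow> j \<in> I \<Longrightarrow> i < j \<Longrightarrow> a i j = 0"
    and comb: "\<And>i. i \<in> I \<Longrightarrow> (\<Sum>j\<in>I. c j * a i j) = 0"
  shows "\<forall>i\<in>I. c i = 0"
proof (rule ccontr)
  assume "\<not> (\<forall>i\<in>I. c i = 0)"
  then have ne: "{i\<in>I. c i \<noteq> 0} \<noteq> {}" by blast
  define i where "i = Min {i\<in>I. c i \<noteq> 0}"
  have i: "i \<in> I" "c i \<noteq> 0"
    using Min_in[OF _ ne] \<open>finite I\<close> unfolding i_def by auto
  have below: "c j = 0" if "j \<in> I" "j < i" for j
  proof (rule ccontr)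
    assume "c j \<noteq> 0"
    then have "i \<le> j" unfolding i_def using \<open>finite I\<close> \<open>j \<in> I\<close> by (intro Min_le) auto
    with \<open>j < i\<close> show False by simp
  qed
  have "(\<Sum>j\<in>I. c j * a i j) = c i * a i i + (\<Sum>j\<in>I - {i}. c j * a i j)"
    using \<open>finite I\<close> i(1) by (simp add: sum.remove)
  also have "(\<Sum>j\<in>I - {i}. c j * a i j) = 0"
    using below upper[OF i(1)] by (intro sum.neutral) (auto simp: neq_iff)
  finally show False
    using comb[OF i(1)] diag[OF i(1)] i(2) by simp
qed

definition monomial_eval :: "('v \<Rightarrow> real) \<Rightarrow> ('v \<Rightarrow>\<^sub>0 nat) \<Rightarrow> real" where
  "monomial_eval f m = (\<Prod>v\<in>Poly_Mapping.keys m. f v ^ Poly_Mapping.lookup m v)"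

definition mpoly_eval :: "('v \<Rightarrow> real) \<Rightarrow> 'v mpoly \<Rightarrow> real" where
  "mpoly_eval f p = (\<Sum>m\<in>Poly_Mapping.keys p. Poly_Mapping.lookup p m * monomial_eval f m)"

lemma monomial_eval_superset:
  "finite S \<Longrightarrow> Poly_Mapping.keys m \<subseteq> S \<Longrightarrow>
    monomial_eval f m = (\<Prod>v\<in>S. f v ^ Poly_Mapping.lookup m v)"
  unfolding monomial_eval_def by (rule prod.mono_neutral_left) (auto simp: in_keys_iff)

lemma monomial_eval_add: "monomial_eval f (a + b) = monomial_eval f a * monomial_eval f b"
  using keys_add[of a b]
  by (simp add: monomial_eval_superset[of "Poly_Mapping.keys a \<union> Poly_Mapping.keys b"]
      lookup_add power_add prod.distrib)

lemma mpoly_eval_superset: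
  "finite S \<Longrightarrow> Poly_Mapping.keys p \<subseteq> S \<Longrightarrow>
    mpoly_eval f p = (\<Sum>m\<in>S. Poly_Mapping.lookup p m * monomial_eval f m)"
  unfolding mpoly_eval_def by (rule sum.mono_neutral_left) (auto simp: in_keys_iff)

lemma mpoly_eval_zero [simp]: "mpoly_eval f 0 = 0"
  by (simp add: mpoly_eval_def)

lemma mpoly_eval_one [simp]: "mpoly_eval f 1 = 1"
  by (simp add: mpoly_eval_def monomial_eval_def)

lemma mpoly_eval_single: "mpoly_eval f (Poly_Mapping.single m a) = a * monomial_eval f m"
  by (cases "a = 0") (simp_all add: mpoly_eval_def)

lemma mpoly_eval_add: "mpoly_eval f (p + q) = mpoly_eval f p + mpoly_eval f q"
  using keys_add[of p q]
  by (simp add: mpoly_eval_superset[of "Poly_Mapping.keys p \<union> Poly_Mapping.keys q"]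
      lookup_add distrib_right sum.distrib)

lemma mpoly_eval_diff: "mpoly_eval f (p - q) = mpoly_eval f p - mpoly_eval f q"
  using mpoly_eval_add[of f "p - q" q] by simp

lemma update_eq_add_single:
  "a \<notin> Poly_Mapping.keys g \<Longrightarrow> Poly_Mapping.update a b g = g + Poly_Mapping.single a b"
  by (rule poly_mapping_eqI) (auto simp: lookup_update lookup_add lookup_single in_keys_iff)

lemma mpoly_eval_mult_single:
  "mpoly_eval f (Poly_Mapping.single m a * q) = a * monomial_eval f m * mpoly_eval f q"
proof (induction q rule: Poly_Mapping.update_induct)
  case const
  then show ?case by simp
next
  case (update g m' b)
  then show ?case
    by (simp add: update_eq_add_single mpoly_eval_add mult_single
        mpoly_eval_single monomial_eval_add algebra_simps)
qed

lemma mpoly_eval_mult: "mpoly_eval f (p * q) = mpoly_eval f p * mpoly_eval f q"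
proof (induction p rule: Poly_Mapping.update_induct)
  case const
  then show ?case by simp
next
  case (update g m a)
  then show ?case
    by (simp add: update_eq_add_single distrib_right mpoly_eval_add mpoly_eval_single
        mpoly_eval_mult_single)
qed

lemma mpoly_eval_sum: "mpoly_eval f (\<Sum>x\<in>A. g x) = (\<Sum>x\<in>A. mpoly_eval f (g x))"
  by (induction A rule: infinite_finite_induct) (simp_all add: mpoly_eval_add)

lemma mpoly_eval_prod: "mpoly_eval f (\<Prod>x\<in>A. g x) = (\<Prod>x\<in>A. mpoly_eval f (g x))"
  by (induction A rule: infinite_finite_induct) (simp_all add: mpoly_eval_mult)

lemma mpoly_eval_phi [simp]: "mpoly_eval f (phi v) = f v"
  by (simp add: phi_def mpoly_eval_single monomial_eval_def del: One_nat_def)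

lemma mpoly_eval_const_poly [simp]: "mpoly_eval f (const_poly c) = c"
  by (simp add: const_poly_def mpoly_eval_single monomial_eval_def)

lemma mpoly_eval_demand_poly: "mpoly_eval f (demand_poly D) = (\<Prod>(u, v)\<in>D. f u - f v)"
  by (simp add: demand_poly_def mpoly_eval_prod case_prod_beta mpoly_eval_diff)

lemma finite_feasible_partitions:
  "finite V \<Longrightarrow> finite {P. partition_on V P \<and> agrees P D}"
  by (rule finite_subset[OF _ finitely_many_partition_on]) auto

lemma mincut_le_cut_weight:
  assumes "finite V" "partition_on V P" "agrees P D"
  shows "mincut V E w D \<le> cut_weight E w P"
  unfolding mincut_def
  using assms finite_feasible_partitions[OF assms(1), of D]
  by (intro cInf_lower bdd_below_finite) auto

lemma mincut_attained:
  assumes "finite V" "demand_graph V D"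
  obtains P where "partition_on V P" "agrees P D" "cut_weight E w P = mincut V E w D"
proof -
  let ?cuts = "cut_weight E w ` {P. partition_on V P \<and> agrees P D}"
  have "(\<lambda>x. {x}) ` V \<in> {P. partition_on V P \<and> agrees P D}"
    using assms(2)
    by (auto simp: partition_on_singletons agrees_def same_part_def demand_graph_def)
  then have "?cuts \<noteq> {}" by blast
  then have "mincut V E w D \<in> ?cuts"
    unfolding mincut_def using finite_feasible_partitions[OF assms(1)]
    by (simp add: cInf_eq_Min)
  then show ?thesis using that by fastforce
qed

lemma partition_labelling:
  assumes "finite V" "partition_on V P"
  obtains f :: "'v \<Rightarrow> real" where "\<And>u v. u \<in> V \<Longrightarrow> v \<in> V \<Longrightarrow> f u = f v \<longleftrightarrow> same_part P u v"
proof -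
  obtain g :: "'v set \<Rightarrow> nat" where g: "inj_on g P"
    using finite_imp_inj_to_nat_seg[OF finite_elements[OF assms]] by metis
  define block where "block v = (SOME X. X \<in> P \<and> v \<in> X)" for v
  have block: "block v \<in> P" "v \<in> block v" if "v \<in> V" for v
    using someI_ex[of "\<lambda>X. X \<in> P \<and> v \<in> X"] partition_onD1[OF assms(2)] that
    unfolding block_def by auto
  have block_unique: "X = block v" if "X \<in> P" "v \<in> X" for X v
    using partition_onD1[OF assms(2)] partition_onD2[OF assms(2)] block[of v] that
    by (auto simp: disjoint_def)
  define f where "f v = real (g (block v))" for v
  have "f u = f v \<longleftrightarrow> same_part P u v" if "u \<in> V" "v \<in> V" for u v
  proof -
    have "f u = f v \<longleftrightarrow> block u = block v"
      using inj_on_eq_iff[OF g block(1)[OF that(1)] block(1)[OF that(2)]] by (simp add: f_def)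
    also have "\<dots> \<longleftrightarrow> same_part P u v"
      unfolding same_part_def using block[OF that(1)] block[OF that(2)] block_unique by blast
    finally show ?thesis .
  qed
  then show ?thesis by (rule that)
qed

lemma mpoly_eval_demand_poly_neq_zero_iff:
  assumes "finite V" "demand_graph V D"
    and f: "\<And>u v. u \<in> V \<Longrightarrow> v \<in> V \<Longrightarrow> f u = f v \<longleftrightarrow> same_part P u v"
  shows "mpoly_eval f (demand_poly D) \<noteq> 0 \<longleftrightarrow> agrees P D"
proof -
  have D: "D \<subseteq> V \<times> V" using assms(2) by (simp add: demand_graph_def)
  then have "finite D" using assms(1) finite_subset by blast
  then have "mpoly_eval f (demand_poly D) \<noteq> 0 \<longleftrightarrow> (\<forall>(u, v)\<in>D. f u \<noteq> f v)"
    by (auto simp: mpoly_eval_demand_poly)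
  also have "\<dots> \<longleftrightarrow> agrees P D"
    unfolding agrees_def using D f by blast
  finally show ?thesis .
qed

lemma minimum_cut_evaluation_point:
  assumes "finite V" "demand_graph V D"
  obtains f :: "'v \<Rightarrow> real" where "mpoly_eval f (demand_poly D) \<noteq> 0"
    and "\<And>D'. demand_graph V D' \<Longrightarrow> mpoly_eval f (demand_poly D') \<noteq> 0 \<Longrightarrow>
           mincut V E w D' \<le> mincut V E w D"
proof -
  obtain P where P: "partition_on V P" "agrees P D" "cut_weight E w P = mincut V E w D"
    using mincut_attained[OF assms] by blast
  obtain f :: "'v \<Rightarrow> real"
    where f: "\<And>u v. u \<in> V \<Longrightarrow> v \<in> V \<Longrightarrow> f u = f v \<longleftrightarrow> same_part P u v"
    using partition_labelling[OF assms(1) P(1)] by blast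
  show ?thesis
  proof
    show "mpoly_eval f (demand_poly D) \<noteq> 0"
      using mpoly_eval_demand_poly_neq_zero_iff[OF assms f] P(2) by blast
  next
    fix D' assume "demand_graph V D'" "mpoly_eval f (demand_poly D') \<noteq> 0"
    then have "agrees P D'" using mpoly_eval_demand_poly_neq_zero_iff[OF assms(1) _ f] by blast
    then show "mincut V E w D' \<le> mincut V E w D"
      using mincut_le_cut_weight[OF assms(1) P(1)] P(3) by metis
  qed
qed

theorem lemma11:
  fixes V :: "'v set" and E :: "'v set set" and w :: "'v set \<Rightarrow> real"
    and D :: "nat \<Rightarrow> ('v \<times> 'v) set" and q k :: nat
  assumes "undirected_graph V E"
    and "\<And>i. i \<in> {1..q} \<Longrightarrow> demand_graph V (D i)"
    and "\<And>i. i \<in> {1..q} \<Longrightarrow> card (D i) = k"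
    and "\<And>i j. i \<in> {1..q} \<Longrightarrow> j \<in> {1..q} \<Longrightarrow> i < j \<Longrightarrow>
           mincut V E w (D i) < mincut V E w (D j)"
  shows "\<forall>c :: nat \<Rightarrow> real.
           (\<Sum>i=1..q. const_poly (c i) * demand_poly (D i)) = 0 \<longrightarrow> (\<forall>i\<in>{1..q}. c i = 0)"
proof (intro allI impI)
  fix c :: "nat \<Rightarrow> real"
  assume combination: "(\<Sum>i=1..q. const_poly (c i) * demand_poly (D i)) = 0"
  have "finite V" using assms(1) by (simp add: undirected_graph_def)
  have "\<forall>i\<in>{1..q}. \<exists>f. mpoly_eval f (demand_poly (D i)) \<noteq> 0 \<and>
      (\<forall>D'. demand_graph V D' \<longrightarrow> mpoly_eval f (demand_poly D') \<noteq> 0 \<longrightarrow>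
        mincut V E w D' \<le> mincut V E w (D i))" (is "\<forall>i\<in>_. \<exists>f. ?P i f")
  proof
    fix i assume "i \<in> {1..q}"
    from minimum_cut_evaluation_point[OF \<open>finite V\<close> assms(2)[OF this]] show "\<exists>f. ?P i f"
      by blast
  qed
  then obtain f where f: "\<forall>i\<in>{1..q}. ?P i (f i)"
    by (rule bchoice[THEN exE])
  show "\<forall>i\<in>{1..q}. c i = 0"
  proof (rule triangular_combination_eq_zero
      [where a = "\<lambda>i j. mpoly_eval (f i) (demand_poly (D j))"])
    show "mpoly_eval (f i) (demand_poly (D j)) = 0" if "i \<in> {1..q}" "j \<in> {1..q}" "i < j" for i j
      using f that(1) assms(2)[OF that(2)] assms(4)[OF that] by force
    show "(\<Sum>j\<in>{1..q}. c j * mpoly_eval (f i) (demand_poly (D j))) = 0" for i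
      using arg_cong[OF combination, of "mpoly_eval (f i)"]
      by (simp add: mpoly_eval_sum mpoly_eval_mult)
  qed (use f in auto)
qed

end
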